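(* For all integers $M,N,p,r\ge1$: (1) $c_p^r(1,N)=N^{p-1}$; (2) $c_p^r(M,1)=M^{p-1}$; (3) $c_1^r(M,N)=1$; (4) $c_p^1(M,N)=(MN)^{p-1}$.
   Context: For integers $M,N,p,r\ge1$, consider triples $(i,a,b)$ with $i=(i_1,\dots,i_r)\in\mathbb Z_M^r$, $a=(a_1,\dots,a_p)\in\mathbb Z_M^p$, $b=(b_1,\dots,b_p)\in\mathbb Z_N^p$, with cyclic conventions $i_{r+1}=i_1$, $b_{p+1}=b_1$. For $x\in\{1,\dots,r\}$, condition $(E_x)$ says that the multisets $\{(i_x+a_y,b_y),(i_{x+1}+a_y,b_{y+1}):y=1,\dots,p\}$ and $\{(i_x+a_y,b_{y+1}),(i_{x+1}+a_y,b_y):y=1,\dots,p\}$ of elements of $\mathbb Z_M\times\mathbb Z_N$ (counted with multiplicity) coincide. Define $c_p^r(M,N)=\frac{1}{M^{r+1}N}\#\{(i,a,b):(E_x)\text{ holds for all }x\}$. *)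

theory Defs
  imports Main "HOL-Library.Multiset" "HOL-Library.FuncSet" Complex_Main
begin

text \<open>Z_M is represented by {0..<M}; tuples indexed by {0..<r} (0-based), as
  extensional functions (PiE). Cyclic successor of index x is (x+1) mod r.\<close>

definition cond_E :: "nat \<Rightarrow> nat \<Rightarrow> nat \<Rightarrow> (nat \<Rightarrow> nat) \<Rightarrow> (nat \<Rightarrow> nat) \<Rightarrow> (nat \<Rightarrow> nat) \<Rightarrow> nat \<Rightarrow> bool" where
  "cond_E M p r i a b x \<longleftrightarrow>
     (let Y = mset_set {0..<p}; x' = (x + 1) mod r in
        image_mset (\<lambda>y. ((i x + a y) mod M, b y)) Y
      + image_mset (\<lambda>y. ((i x' + a y) mod M, b ((y + 1) mod p))) Y
      = image_mset (\<lambda>y. ((i x + a y) mod M, b ((y + 1) mod p))) Y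
      + image_mset (\<lambda>y. ((i x' + a y) mod M, b y)) Y)"

definition good_triples :: "nat \<Rightarrow> nat \<Rightarrow> nat \<Rightarrow> nat \<Rightarrow> ((nat \<Rightarrow> nat) \<times> (nat \<Rightarrow> nat) \<times> (nat \<Rightarrow> nat)) set" where
  "good_triples M N p r =
     {(i, a, b). i \<in> PiE {0..<r} (\<lambda>_. {0..<M}) \<and> a \<in> PiE {0..<p} (\<lambda>_. {0..<M})
        \<and> b \<in> PiE {0..<p} (\<lambda>_. {0..<N}) \<and> (\<forall>x \<in> {0..<r}. cond_E M p r i a b x)}"

definition c_const :: "nat \<Rightarrow> nat \<Rightarrow> nat \<Rightarrow> nat \<Rightarrow> real" where
  "c_const p r M N = real (card (good_triples M N p r)) / (real M ^ (r + 1) * real N)"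

end

theory Submission
  imports Defs
begin

text \<open>Condition (E_x) compares the multisets A + B' and B + A', where A and B pair the
  shifts by i_x with b_y and b_(y+1) respectively, and A', B' do the same for i_(x+1).
  It holds trivially when i_x = i_(x+1) mod M (then A = A' and B = B'), which covers M = 1
  and r = 1, and when b is constant (then A = B and A' = B'), which covers N = 1 and p = 1.
  In these four cases every triple is counted, and the normalisation of c leaves
  (M N)^(p-1).\<close>

lemma cond_E_if_shift_cong:
  assumes "i x mod M = i ((x + 1) mod r) mod M"
  shows "cond_E M p r i a b x"
proof -
  have shift: "(i x + a y) mod M = (i ((x + 1) mod r) + a y) mod M" for y
    using assms by (rule mod_add_cong) simp
  show ?thesis
    unfolding cond_E_def Let_def shift by (simp add: add.commute)
qed

lemma cond_E_if_constant:
  assumes "\<And>y z. y < p \<Longrightarrow> z < p \<Longrightarrow> b y = b z"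
  shows "cond_E M p r i a b x"
proof -
  have shift: "image_mset (\<lambda>y. (f y, b ((y + 1) mod p))) (mset_set {0..<p})
             = image_mset (\<lambda>y. (f y, b y)) (mset_set {0..<p})" for f :: "nat \<Rightarrow> nat"
    by (intro image_mset_cong) (auto intro: assms)
  show ?thesis
    unfolding cond_E_def Let_def shift by (simp add: add.commute)
qed

lemma card_good_triples_if_cond_E:
  assumes "\<And>i a b x. i \<in> PiE {0..<r} (\<lambda>_. {0..<M}) \<Longrightarrow> a \<in> PiE {0..<p} (\<lambda>_. {0..<M})
        \<Longrightarrow> b \<in> PiE {0..<p} (\<lambda>_. {0..<N}) \<Longrightarrow> x < r \<Longrightarrow> cond_E M p r i a b x"
  shows "card (good_triples M N p r) = M ^ r * M ^ p * N ^ p"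
proof -
  have "good_triples M N p r
      = PiE {0..<r} (\<lambda>_. {0..<M}) \<times> PiE {0..<p} (\<lambda>_. {0..<M}) \<times> PiE {0..<p} (\<lambda>_. {0..<N})"
    unfolding good_triples_def using assms by auto
  then show ?thesis
    by (simp add: card_cartesian_product card_PiE)
qed

lemma c_const_if_cond_E:
  assumes "M \<ge> 1" "N \<ge> 1" "p \<ge> 1"
    and "\<And>i a b x. i \<in> PiE {0..<r} (\<lambda>_. {0..<M}) \<Longrightarrow> a \<in> PiE {0..<p} (\<lambda>_. {0..<M})
        \<Longrightarrow> b \<in> PiE {0..<p} (\<lambda>_. {0..<N}) \<Longrightarrow> x < r \<Longrightarrow> cond_E M p r i a b x"
  shows "c_const p r M N = (real M * real N) ^ (p - 1)"
proof -
  obtain q where p: "p = Suc q"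
    using assms(3) by (cases p) auto
  have "card (good_triples M N p r) = M ^ r * M ^ p * N ^ p"
    using card_good_triples_if_cond_E assms(4) by blast
  then show ?thesis
    unfolding c_const_def p using assms(1,2)
    by (simp add: field_simps)
qed

lemma PiE_singleton_range_eq_0:
  fixes b :: "nat \<Rightarrow> nat"
  assumes "b \<in> PiE {0..<p} (\<lambda>_. {0..<Suc 0})" "y < p"
  shows "b y = 0"
  using PiE_mem[OF assms(1), of y] assms(2) by simp

theorem proposition3p1:
  fixes M N p r :: nat
  assumes "M \<ge> 1" "N \<ge> 1" "p \<ge> 1" "r \<ge> 1"
  shows "c_const p r 1 N = real N ^ (p - 1) \<and>
         c_const p r M 1 = real M ^ (p - 1) \<and>
         c_const 1 r M N = 1 \<and>
         c_const p 1 M N = (real M * real N) ^ (p - 1)"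
proof (intro conjI)
  have "c_const p r 1 N = (real 1 * real N) ^ (p - 1)"
    by (rule c_const_if_cond_E) (use assms in \<open>auto intro: cond_E_if_shift_cong\<close>)
  then show "c_const p r 1 N = real N ^ (p - 1)"
    by simp
  have "c_const p r M 1 = (real M * real 1) ^ (p - 1)"
    by (rule c_const_if_cond_E)
      (use assms in \<open>auto intro: cond_E_if_constant simp: PiE_singleton_range_eq_0\<close>)
  then show "c_const p r M 1 = real M ^ (p - 1)"
    by simp
  have "c_const 1 r M N = (real M * real N) ^ (1 - 1)"
    by (rule c_const_if_cond_E) (use assms in \<open>auto intro: cond_E_if_constant\<close>)
  then show "c_const 1 r M N = 1"
    by simp
  show "c_const p 1 M N = (real M * real N) ^ (p - 1)"
    by (rule c_const_if_cond_E) (use assms in \<open>auto intro: cond_E_if_shift_cong\<close>)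
qed

end
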